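(* Let $T=(V,E)$ be an $X$-tree and $f$ an interior edge of $T$. For each basis $B$ of $\mathbb{M}(T/f)$ and each cord $xy\in\binom{X}{2}$, let $\rho_{xy}\in\mathbb{R}^B$ be the unique map with $\lambda^{T/f}_{xy}=\sum_{b\in B}\rho_{xy}(b)\lambda^{T/f}_b$. Then the set $\mathbb{B}(T)$ of bases of $\mathbb{M}(T)$ equals $$\Big\{\{xy\}\cup B:\ xy\in\tbinom{X}{2},\ B\in\mathbb{B}(T/f),\ \sum_{b\in B}\rho_{xy}(b)\,\delta_{f|b}\neq\delta_{f|xy}\Big\},$$ where for a cord $zz'$, $\delta_{f|zz'}=1$ if $f\in E(z|z')$ and $\delta_{f|zz'}=0$ otherwise.
   Context: Let $X$ be a finite set with $|X|=n\ge 3$. An $X$-tree is a finite tree $T=(V,E)$ whose set of degree-1 vertices is exactly $X$ and which has no vertices of degree $2$; interior edges are edges not containing a leaf. A cord is a $2$-subset $\{x,y\}$ of $X$, written $xy$. $E(u|v)$ is the set of edges on the path from $u$ to $v$ in $T$. For each cord $xy$, $\lambda^T_{xy}:\mathbb{R}^E\to\mathbb{R}$, $\omega\mapsto\sum_{e\in E(x|y)}\omega(e)$. $\mathbb{M}(T)$ is the matroid on ground set $\binom{X}{2}$ represented over $\mathbb{R}$ by $xy\mapsto\lambda^T_{xy}$ (rank function $\mathrm{rk}^T(\mathcal{L})=\dim\mathrm{span}\{\lambda^T_{xy}:xy\in\mathcal{L}\}$); its rank is $|E|$ and $\mathbb{B}(T)$ denotes its set of bases. $T/f$ is the $X$-tree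 obtained by contracting the edge $f$, with edge set identified with $E-\{f\}$ and paths inherited from $T$. *)

theory Defs
  imports Complex_Main "HOL-Library.FuncSet"
begin

definition is_path :: "'v set set \<Rightarrow> 'v list \<Rightarrow> 'v \<Rightarrow> 'v \<Rightarrow> bool" where
  "is_path E p u v \<longleftrightarrow> p \<noteq> [] \<and> hd p = u \<and> last p = v \<and> distinct p \<and>
     (\<forall>i. Suc i < length p \<longrightarrow> {p ! i, p ! Suc i} \<in> E)"

definition path_edges :: "'v list \<Rightarrow> 'v set set" where
  "path_edges p = {{p ! i, p ! Suc i} | i. Suc i < length p}"

definition is_tree :: "'v set \<Rightarrow> 'v set set \<Rightarrow> bool" where
  "is_tree V E \<longleftrightarrow> finite V \<and> V \<noteq> {} \<and>
     (\<forall>e\<in>E. \<exists>u v. u \<noteq> v \<and> u \<in> V \<and> v \<in> V \<and> e = {u, v}) \<and>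
     (\<forall>u\<in>V. \<forall>v\<in>V. \<exists>!p. is_path E p u v)"

definition degree :: "'v set set \<Rightarrow> 'v \<Rightarrow> nat" where
  "degree E v = card {e \<in> E. v \<in> e}"

definition is_X_tree :: "'v set \<Rightarrow> 'v set \<Rightarrow> 'v set set \<Rightarrow> bool" where
  "is_X_tree X V E \<longleftrightarrow> is_tree V E \<and> {v \<in> V. degree E v = 1} = X \<and>
     (\<forall>v\<in>V. degree E v \<noteq> 2)"

definition interior_edge :: "'v set \<Rightarrow> 'v set set \<Rightarrow> 'v set \<Rightarrow> bool" where
  "interior_edge X E f \<longleftrightarrow> f \<in> E \<and> f \<inter> X = {}"

definition E_path :: "'v set set \<Rightarrow> 'v \<Rightarrow> 'v \<Rightarrow> 'v set set" where
  "E_path E u v = path_edges (THE p. is_path E p u v)"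

definition cords :: "'v set \<Rightarrow> 'v set set" where
  "cords X = {c. c \<subseteq> X \<and> card c = 2}"

definition cord_path :: "'v set set \<Rightarrow> 'v set \<Rightarrow> 'v set set" where
  "cord_path E c = \<Union>{E_path E x y | x y. c = {x, y}}"

text \<open>Paths in the contraction T/f (edge set E - {f}, paths inherited from T).\<close>
definition cord_path_contr :: "'v set set \<Rightarrow> 'v set \<Rightarrow> 'v set \<Rightarrow> 'v set set" where
  "cord_path_contr E f c = cord_path E c - {f}"

definition lam :: "('v set \<Rightarrow> 'v set set) \<Rightarrow> 'v set \<Rightarrow> ('v set \<Rightarrow> real) \<Rightarrow> real" where
  "lam P c \<omega> = (\<Sum>e\<in>P c. \<omega> e)"

definition indep :: "('v set \<Rightarrow> 'v set set) \<Rightarrow> 'v set set \<Rightarrow> bool" where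
  "indep P L \<longleftrightarrow> finite L \<and>
     (\<forall>a :: 'v set \<Rightarrow> real. (\<forall>\<omega>. (\<Sum>l\<in>L. a l * lam P l \<omega>) = 0) \<longrightarrow> (\<forall>l\<in>L. a l = 0))"

definition bases :: "'v set \<Rightarrow> ('v set \<Rightarrow> 'v set set) \<Rightarrow> 'v set set set" where
  "bases X P = {B. B \<subseteq> cords X \<and> indep P B \<and>
     (\<forall>B'. B \<subseteq> B' \<and> B' \<subseteq> cords X \<and> indep P B' \<longrightarrow> B' = B)}"

definition rho :: "'v set set \<Rightarrow> 'v set \<Rightarrow> 'v set set \<Rightarrow> 'v set \<Rightarrow> ('v set \<Rightarrow> real)" where
  "rho E f B c = (THE r. r \<in> extensional B \<and>
     (\<forall>\<omega>. lam (cord_path_contr E f) c \<omega> = (\<Sum>b\<in>B. r b * lam (cord_path_contr E f) b \<omega>)))"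

definition delta :: "'v set set \<Rightarrow> 'v set \<Rightarrow> 'v set \<Rightarrow> real" where
  "delta E f c = (if f \<in> cord_path E c then 1 else 0)"

end

theory Submission
  imports Defs "HOL-Library.Function_Algebras"
begin

(*
  Identify each cord c with the 0/1 indicator vector of its path, an element
  of the real vector space of functions on edges; the matroid M(T) is then the linear matroid
  of these indicator vectors, and M(T/f) is the linear matroid of the same vectors with
  coordinate f deleted.  The theorem is an instance of a general fact about a finite family
  of vectors v_c whose span contains the unit vector u_f at coordinate f: the maximal
  independent subfamilies of v are exactly the sets {c} \<union> B, where B is maximal independent
  after deleting coordinate f, and v_c leaves the span of v(B) -- which happens exactly when
  the f-coordinate of v_c differs from the value predicted by the coefficients expressing the
  projected v_c over B.
*)

section \<open>Real-valued functions as a vector space\<close>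

text \<open>Scalar multiplication on functions; together with the pointwise group structure of
  Function_Algebras it makes 'a \<Rightarrow> real a real vector space.\<close>
definition scale_fun :: "real \<Rightarrow> ('a \<Rightarrow> real) \<Rightarrow> ('a \<Rightarrow> real)" where
  "scale_fun r g = (\<lambda>x. r * g x)"

global_interpretation fvs: vector_space scale_fun
  by unfold_locales (auto simp: scale_fun_def fun_eq_iff algebra_simps)

lemma sum_fun_apply: "(sum g B) x = (\<Sum>b\<in>B. g b x)"
  by (induction B rule: infinite_finite_induct) auto

lemma scale_fun_apply: "scale_fun r g x = r * g x"
  by (simp add: scale_fun_def)

text \<open>Linear independence of a finite family of vectors indexed by L (repetitions allowed
  in the index, so an injectivity requirement is built in).\<close>
definition lin_indep :: "('c \<Rightarrow> 'e \<Rightarrow> real) \<Rightarrow> 'c set \<Rightarrow> bool" where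
  "lin_indep v L \<longleftrightarrow> finite L \<and>
     (\<forall>a. (\<Sum>l\<in>L. scale_fun (a l) (v l)) = 0 \<longrightarrow> (\<forall>l\<in>L. a l = 0))"

lemma lin_indep_iff:
  "lin_indep v L \<longleftrightarrow> finite L \<and> inj_on v L \<and> fvs.independent (v ` L)"
proof
  assume "lin_indep v L"
  hence fin: "finite L"
    and zero: "\<And>a. (\<Sum>l\<in>L. scale_fun (a l) (v l)) = 0 \<Longrightarrow> \<forall>l\<in>L. a l = 0"
    by (auto simp: lin_indep_def)
  have inj: "inj_on v L"
  proof (rule inj_onI, rule ccontr)
    fix x y assume xy: "x \<in> L" "y \<in> L" "v x = v y" "x \<noteq> y"
    define a where "a = (\<lambda>l. if l = x then (1::real) else if l = y then -1 else 0)"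
    have "(\<Sum>l\<in>L. scale_fun (a l) (v l)) = (\<Sum>l\<in>{x,y}. scale_fun (a l) (v l))"
      by (rule sum.mono_neutral_right) (use fin xy in \<open>auto simp: a_def scale_fun_def fun_eq_iff\<close>)
    also have "\<dots> = 0" using xy by (auto simp: a_def scale_fun_def fun_eq_iff)
    finally have "\<forall>l\<in>L. a l = 0" by (rule zero)
    with xy show False by (auto simp: a_def)
  qed
  have "fvs.independent (v ` L)"
  proof (rule fvs.independent_if_scalars_zero)
    show "finite (v ` L)" using fin by simp
    fix g x assume s: "(\<Sum>x\<in>v ` L. scale_fun (g x) x) = 0" and x: "x \<in> v ` L"
    have "(\<Sum>l\<in>L. scale_fun (g (v l)) (v l)) = 0" using s by (simp add: sum.reindex[OF inj])
    hence "\<forall>l\<in>L. g (v l) = 0" by (rule zero)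
    with x show "g x = 0" by auto
  qed
  with fin inj show "finite L \<and> inj_on v L \<and> fvs.independent (v ` L)" by simp
next
  assume "finite L \<and> inj_on v L \<and> fvs.independent (v ` L)"
  hence fin: "finite L" and inj: "inj_on v L" and ind: "fvs.independent (v ` L)" by auto
  show "lin_indep v L" unfolding lin_indep_def
  proof (intro conjI allI impI ballI)
    show "finite L" by fact
    fix a l assume s: "(\<Sum>l\<in>L. scale_fun (a l) (v l)) = 0" and l: "l \<in> L"
    define g where "g = (\<lambda>x. a (the_inv_into L v x))"
    have "(\<Sum>x\<in>v ` L. scale_fun (g x) x) = (\<Sum>l\<in>L. scale_fun (g (v l)) (v l))"
      by (simp add: sum.reindex[OF inj])
    also have "\<dots> = (\<Sum>l\<in>L. scale_fun (a l) (v l))"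
      by (rule sum.cong) (auto simp: g_def the_inv_into_f_f[OF inj])
    finally have "(\<Sum>x\<in>v ` L. scale_fun (g x) x) = 0" using s by simp
    hence "g (v l) = 0" using ind fin l by (auto simp: fvs.dependent_finite)
    thus "a l = 0" by (simp add: g_def the_inv_into_f_f[OF inj l])
  qed
qed

lemma lin_indep_card_image: "lin_indep v A \<Longrightarrow> card (v ` A) = card A"
  by (simp add: lin_indep_iff card_image)

lemma lin_indep_insert_iff:
  assumes "lin_indep v B" "c \<notin> B"
  shows "lin_indep v (insert c B) \<longleftrightarrow> v c \<notin> fvs.span (v ` B)"
  using assms fvs.span_base[of "v c" "v ` B"]
  by (auto simp: lin_indep_iff fvs.independent_insert)

lemma span_image_combination:
  assumes "finite B" "y \<in> fvs.span (g ` B)"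
  shows "\<exists>r. y = (\<Sum>b\<in>B. scale_fun (r b) (g b))"
  using assms(2)
proof (induction rule: fvs.span_induct_alt)
  case base
  show ?case by (rule exI[of _ "\<lambda>_. 0"]) (simp add: scale_fun_def fun_eq_iff zero_fun_def)
next
  case (step c x y)
  then obtain r where r: "y = (\<Sum>b\<in>B. scale_fun (r b) (g b))" by blast
  from step obtain b0 where b0: "b0 \<in> B" "x = g b0" by blast
  define r' where "r' = (\<lambda>b. r b + (if b = b0 then c else 0))"
  have "(\<Sum>b\<in>B. (if b = b0 then c else 0) * g b z) = (\<Sum>b\<in>B. if b = b0 then c * x z else 0)" for z
    using b0 by (intro sum.cong) auto
  hence "(\<Sum>b\<in>B. (if b = b0 then c else 0) * g b z) = c * x z" for z
    using b0 assms(1) by simp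
  hence "(\<Sum>b\<in>B. scale_fun (r' b) (g b)) = y + scale_fun c x"
    using r by (simp add: r'_def scale_fun_def fun_eq_iff sum.distrib distrib_right sum_fun_apply)
  thus ?case by (intro exI[of _ r']) (metis add.commute)
qed

lemma combination_in_span:
  "(\<And>b. b \<in> B \<Longrightarrow> g b \<in> fvs.span S) \<Longrightarrow> (\<Sum>b\<in>B. scale_fun (r b) (g b)) \<in> fvs.span S"
  by (intro fvs.span_sum fvs.span_scale) auto

lemma lin_indep_unique_coeffs:
  assumes "lin_indep v B" "(\<Sum>b\<in>B. scale_fun (r b) (v b)) = (\<Sum>b\<in>B. scale_fun (s b) (v b))"
  shows "\<forall>b\<in>B. r b = s b"
proof -
  have "(\<Sum>b\<in>B. scale_fun (r b - s b) (v b))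
      = (\<Sum>b\<in>B. scale_fun (r b) (v b)) - (\<Sum>b\<in>B. scale_fun (s b) (v b))"
    by (simp add: fun_eq_iff sum_fun_apply scale_fun_def left_diff_distrib sum_subtractf)
  also have "\<dots> = 0" using assms(2) by simp
  finally show ?thesis using assms(1) unfolding lin_indep_def by fastforce
qed

definition max_indep :: "('c \<Rightarrow> 'e \<Rightarrow> real) \<Rightarrow> 'c set \<Rightarrow> 'c set \<Rightarrow> bool" where
  "max_indep v C A \<longleftrightarrow> A \<subseteq> C \<and> lin_indep v A \<and>
     (\<forall>A'. A \<subseteq> A' \<and> A' \<subseteq> C \<and> lin_indep v A' \<longrightarrow> A' = A)"

definition coeffs :: "('c \<Rightarrow> 'e \<Rightarrow> real) \<Rightarrow> 'c set \<Rightarrow> 'c \<Rightarrow> ('c \<Rightarrow> real)" where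
  "coeffs v B c = (THE r. r \<in> extensional B \<and> v c = (\<Sum>b\<in>B. scale_fun (r b) (v b)))"

lemma coeffs_eq:
  assumes "lin_indep v B" "v c = (\<Sum>b\<in>B. scale_fun (r b) (v b))"
  shows "coeffs v B c = restrict r B"
  unfolding coeffs_def
proof (rule the_equality)
  have "(\<Sum>b\<in>B. scale_fun (restrict r B b) (v b)) = (\<Sum>b\<in>B. scale_fun (r b) (v b))"
    by (rule sum.cong) auto
  thus "restrict r B \<in> extensional B \<and> v c = (\<Sum>b\<in>B. scale_fun (restrict r B b) (v b))"
    using assms(2) by simp
next
  fix r' assume h: "r' \<in> extensional B \<and> v c = (\<Sum>b\<in>B. scale_fun (r' b) (v b))"
  hence "(\<Sum>b\<in>B. scale_fun (r' b) (v b)) = (\<Sum>b\<in>B. scale_fun (r b) (v b))"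
    using assms(2) by (metis (no_types))
  hence "\<forall>b\<in>B. r' b = r b" by (rule lin_indep_unique_coeffs[OF assms(1)])
  with h show "r' = restrict r B" by (auto simp: fun_eq_iff extensional_def)
qed

lemma max_indep_spans:
  assumes "max_indep v C A"
  shows "v ` C \<subseteq> fvs.span (v ` A)"
proof
  fix y assume "y \<in> v ` C"
  then obtain c where c: "c \<in> C" "y = v c" by auto
  have A: "A \<subseteq> C" "lin_indep v A" "\<And>A'. A \<subseteq> A' \<Longrightarrow> A' \<subseteq> C \<Longrightarrow> lin_indep v A' \<Longrightarrow> A' = A"
    using assms by (auto simp: max_indep_def)
  show "y \<in> fvs.span (v ` A)"
  proof (cases "c \<in> A")
    case True thus ?thesis using c fvs.span_base by blast
  next
    case False
    have "\<not> lin_indep v (insert c A)" using A(3)[of "insert c A"] A(1) c False by auto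
    thus ?thesis using lin_indep_insert_iff[OF A(2) False] c by simp
  qed
qed

lemma max_indep_by_card:
  assumes "A \<subseteq> C" "lin_indep v A" "\<And>A'. A' \<subseteq> C \<Longrightarrow> lin_indep v A' \<Longrightarrow> card A' \<le> card A"
  shows "max_indep v C A"
  unfolding max_indep_def
proof (intro conjI allI impI)
  fix A' assume h: "A \<subseteq> A' \<and> A' \<subseteq> C \<and> lin_indep v A'"
  thus "A' = A" using assms(3)[of A'] card_seteq[of A' A] by (simp add: lin_indep_def)
qed (use assms in auto)

lemma spanning_indep_is_max_indep:
  assumes "B \<subseteq> C" "lin_indep v B" "v ` C \<subseteq> fvs.span (v ` B)"
  shows "max_indep v C B"
proof (rule max_indep_by_card[OF assms(1,2)])
  fix B' assume h: "B' \<subseteq> C" "lin_indep v B'"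
  have "finite B" using assms(2) by (simp add: lin_indep_def)
  hence "card (v ` B') \<le> card (v ` B)"
    using fvs.independent_span_bound[of "v ` B" "v ` B'"] h assms(3)
    by (auto simp: lin_indep_iff)
  thus "card B' \<le> card B" using h(2) assms(2) by (simp add: lin_indep_card_image)
qed

section \<open>Deleting one coordinate of a family of vectors\<close>

definition drop_coord :: "'e \<Rightarrow> ('e \<Rightarrow> real) \<Rightarrow> ('e \<Rightarrow> real)" where
  "drop_coord f0 x = x(f0 := 0)"

definition unit_vec :: "'e \<Rightarrow> ('e \<Rightarrow> real)" where
  "unit_vec f0 = (\<lambda>x. if x = f0 then 1 else 0)"

text \<open>The family v with coordinate f0 deleted; for path indicators this is the contraction.\<close>
definition drop_family :: "('c \<Rightarrow> 'e \<Rightarrow> real) \<Rightarrow> 'e \<Rightarrow> 'c \<Rightarrow> 'e \<Rightarrow> real" where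
  "drop_family v f0 c = drop_coord f0 (v c)"

lemma drop_coord_combination:
  "drop_coord f0 (\<Sum>b\<in>B. scale_fun (r b) (g b)) = (\<Sum>b\<in>B. scale_fun (r b) (drop_coord f0 (g b)))"
  by (auto simp: drop_coord_def fun_eq_iff sum_fun_apply scale_fun_apply)

lemma drop_coord_span:
  assumes "x \<in> fvs.span (v ` K)"
  shows "drop_coord f0 x \<in> fvs.span (drop_family v f0 ` K)"
  using assms
proof (induction rule: fvs.span_induct_alt)
  case base
  have "drop_coord f0 0 = 0" by (simp add: drop_coord_def fun_eq_iff)
  thus ?case using fvs.span_zero by metis
next
  case (step c x y)
  have "drop_coord f0 (scale_fun c x + y) = scale_fun c (drop_coord f0 x) + drop_coord f0 y"
    by (simp add: drop_coord_def fun_eq_iff scale_fun_apply)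
  moreover have "drop_coord f0 x \<in> drop_family v f0 ` K"
    using step by (auto simp: drop_family_def)
  hence "scale_fun c (drop_coord f0 x) \<in> fvs.span (drop_family v f0 ` K)"
    by (intro fvs.span_scale fvs.span_base)
  ultimately show ?case using step fvs.span_add by metis
qed

lemma span_lift_drop_coord:
  assumes fin: "finite B" and sp: "drop_family v f0 ` C \<subseteq> fvs.span (drop_family v f0 ` B)"
    and x: "x \<in> fvs.span (v ` C)"
  shows "x \<in> fvs.span (insert (unit_vec f0) (v ` B))"
proof -
  have "drop_coord f0 x \<in> fvs.span (drop_family v f0 ` C)" by (rule drop_coord_span[OF x])
  also have "\<dots> \<subseteq> fvs.span (drop_family v f0 ` B)"
    by (rule fvs.span_minimal[OF sp]) simp
  finally obtain r where r: "drop_coord f0 x = (\<Sum>b\<in>B. scale_fun (r b) (drop_family v f0 b))"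
    using span_image_combination[OF fin] by blast
  define z where "z = x - (\<Sum>b\<in>B. scale_fun (r b) (v b))"
  have "z = scale_fun (z f0) (unit_vec f0)"
  proof
    fix e show "z e = scale_fun (z f0) (unit_vec f0) e"
    proof (cases "e = f0")
      case False
      have "drop_coord f0 x e = (\<Sum>b\<in>B. scale_fun (r b) (drop_family v f0 b)) e" using r by simp
      hence "x e = (\<Sum>b\<in>B. r b * v b e)"
        using False by (simp add: drop_coord_def drop_family_def sum_fun_apply scale_fun_apply)
      thus ?thesis using False by (simp add: z_def unit_vec_def sum_fun_apply scale_fun_apply)
    qed (simp add: unit_vec_def scale_fun_apply)
  qed
  hence "x = scale_fun (z f0) (unit_vec f0) + (\<Sum>b\<in>B. scale_fun (r b) (v b))"
    by (metis z_def diff_add_cancel)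
  moreover have "scale_fun (z f0) (unit_vec f0) \<in> fvs.span (insert (unit_vec f0) (v ` B))"
    by (intro fvs.span_scale fvs.span_base) simp
  moreover have "(\<Sum>b\<in>B. scale_fun (r b) (v b)) \<in> fvs.span (insert (unit_vec f0) (v ` B))"
    by (intro combination_in_span fvs.span_base) auto
  ultimately show ?thesis by (metis fvs.span_add)
qed

lemma lin_indep_drop_lift:
  assumes "lin_indep (drop_family v f0) B"
  shows "lin_indep v B"
  unfolding lin_indep_def
proof (intro conjI allI impI)
  show "finite B" using assms by (simp add: lin_indep_def)
  fix a assume "(\<Sum>l\<in>B. scale_fun (a l) (v l)) = 0"
  hence "drop_coord f0 (\<Sum>l\<in>B. scale_fun (a l) (v l)) = drop_coord f0 0" by simp
  hence "(\<Sum>l\<in>B. scale_fun (a l) (drop_family v f0 l)) = (\<Sum>l\<in>B. scale_fun 0 (drop_family v f0 l))"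
    unfolding drop_coord_combination
    by (simp add: drop_family_def drop_coord_def fun_eq_iff sum_fun_apply scale_fun_apply)
  thus "\<forall>l\<in>B. a l = 0" using lin_indep_unique_coeffs[OF assms, of a "\<lambda>_. 0"] by simp
qed

text \<open>If A stays independent after deleting f0, the unit vector at f0 is not in the span of
  v(A): projecting an expression for it would give a trivial combination.\<close>
lemma unit_vec_not_in_span:
  assumes fiA: "lin_indep (drop_family v f0) A"
  shows "unit_vec f0 \<notin> fvs.span (v ` A)"
proof
  assume "unit_vec f0 \<in> fvs.span (v ` A)"
  moreover have finA: "finite A" using fiA by (simp add: lin_indep_def)
  ultimately obtain r where r: "unit_vec f0 = (\<Sum>b\<in>A. scale_fun (r b) (v b))"
    using span_image_combination by blast
  have "drop_coord f0 (unit_vec f0) = (\<Sum>b\<in>A. scale_fun (r b) (drop_family v f0 b))"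
    unfolding drop_family_def by (subst r) (rule drop_coord_combination)
  moreover have "drop_coord f0 (unit_vec f0) = (\<Sum>b\<in>A. scale_fun 0 (drop_family v f0 b))"
    by (simp add: drop_coord_def unit_vec_def fun_eq_iff sum_fun_apply scale_fun_apply)
  ultimately have "\<forall>b\<in>A. r b = 0" using lin_indep_unique_coeffs[OF fiA, of r "\<lambda>_. 0"] by simp
  moreover have "unit_vec f0 f0 = (\<Sum>b\<in>A. r b * v b f0)"
    using r by (simp add: sum_fun_apply scale_fun_apply)
  ultimately show False by (simp add: unit_vec_def)
qed

text \<open>Rank bound: deleting a coordinate lowers the rank by at most one.\<close>
lemma card_le_drop_basis:
  assumes finB: "finite B" and spB: "drop_family v f0 ` C \<subseteq> fvs.span (drop_family v f0 ` B)"
    and A: "A \<subseteq> C" "lin_indep v A"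
  shows "card A \<le> card B + 1"
proof -
  have "v ` A \<subseteq> fvs.span (insert (unit_vec f0) (v ` B))"
  proof
    fix x assume "x \<in> v ` A"
    hence "x \<in> fvs.span (v ` C)" using A(1) by (auto intro: fvs.span_base)
    thus "x \<in> fvs.span (insert (unit_vec f0) (v ` B))" by (rule span_lift_drop_coord[OF finB spB])
  qed
  hence "card (v ` A) \<le> card (insert (unit_vec f0) (v ` B))"
    using fvs.independent_span_bound[of "insert (unit_vec f0) (v ` B)" "v ` A"] A(2) finB
    by (simp add: lin_indep_iff)
  also have "\<dots> \<le> card B + 1"
    using card_image_le[OF finB, of v] by (simp add: card_insert_if finB)
  finally show ?thesis using lin_indep_card_image[OF A(2)] by simp
qed

lemma in_span_iff_coord_match:
  assumes fiB: "lin_indep (drop_family v f0) B"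
    and r: "drop_family v f0 c = (\<Sum>b\<in>B. scale_fun (r b) (drop_family v f0 b))"
  shows "v c \<in> fvs.span (v ` B) \<longleftrightarrow> (\<Sum>b\<in>B. r b * v b f0) = v c f0"
proof
  let ?vF = "drop_family v f0"
  have finB: "finite B" using fiB by (simp add: lin_indep_def)
  assume "v c \<in> fvs.span (v ` B)"
  then obtain s where s: "v c = (\<Sum>b\<in>B. scale_fun (s b) (v b))"
    using span_image_combination[OF finB] by blast
  have "?vF c = (\<Sum>b\<in>B. scale_fun (s b) (?vF b))"
    unfolding drop_family_def s drop_coord_combination ..
  hence "(\<Sum>b\<in>B. scale_fun (s b) (?vF b)) = (\<Sum>b\<in>B. scale_fun (r b) (?vF b))"
    using r by simp
  hence "\<forall>b\<in>B. s b = r b" by (rule lin_indep_unique_coeffs[OF fiB])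
  moreover have "v c f0 = (\<Sum>b\<in>B. s b * v b f0)"
    by (subst s) (simp add: sum_fun_apply scale_fun_apply)
  ultimately show "(\<Sum>b\<in>B. r b * v b f0) = v c f0" by simp
next
  assume eq: "(\<Sum>b\<in>B. r b * v b f0) = v c f0"
  have "v c = (\<Sum>b\<in>B. scale_fun (r b) (v b))"
  proof
    fix e show "v c e = (\<Sum>b\<in>B. scale_fun (r b) (v b)) e"
    proof (cases "e = f0")
      case False
      have "drop_family v f0 c e = (\<Sum>b\<in>B. scale_fun (r b) (drop_family v f0 b)) e" using r by simp
      thus ?thesis
        using False by (simp add: drop_family_def drop_coord_def sum_fun_apply scale_fun_apply)
    qed (use eq in \<open>simp add: sum_fun_apply scale_fun_apply\<close>)
  qed
  thus "v c \<in> fvs.span (v ` B)" by (auto intro: combination_in_span fvs.span_base)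
qed

lemma coeffs_mismatch_iff:
  assumes bB: "max_indep (drop_family v f0) C B" and cC: "c \<in> C"
  shows "(\<Sum>b\<in>B. coeffs (drop_family v f0) B c b * v b f0) \<noteq> v c f0
     \<longleftrightarrow> v c \<notin> fvs.span (v ` B)"
proof -
  let ?vF = "drop_family v f0"
  have fiB: "lin_indep ?vF B" using bB by (simp add: max_indep_def)
  hence finB: "finite B" by (simp add: lin_indep_def)
  have "?vF c \<in> fvs.span (?vF ` B)" using max_indep_spans[OF bB] cC by auto
  then obtain r where r: "?vF c = (\<Sum>b\<in>B. scale_fun (r b) (?vF b))"
    using span_image_combination[OF finB] by blast
  have "(\<Sum>b\<in>B. coeffs ?vF B c b * v b f0) = (\<Sum>b\<in>B. r b * v b f0)"
    unfolding coeffs_eq[OF fiB r] by (rule sum.cong) auto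
  thus ?thesis using in_span_iff_coord_match[OF fiB r] by simp
qed

lemma max_indep_split:
  assumes uf: "unit_vec f0 \<in> fvs.span (v ` C)" and bA: "max_indep v C A"
  obtains c B where "A = insert c B" "c \<notin> B" "max_indep (drop_family v f0) C B"
proof -
  let ?vF = "drop_family v f0"
  have AC: "A \<subseteq> C" and fiA: "lin_indep v A" using bA by (auto simp: max_indep_def)
  hence finA: "finite A" by (simp add: lin_indep_def)
  have spA: "v ` C \<subseteq> fvs.span (v ` A)" by (rule max_indep_spans[OF bA])
  have spFA: "?vF ` C \<subseteq> fvs.span (?vF ` A)"
    using spA drop_coord_span[where v=v and K=A] by (auto simp: drop_family_def)
  obtain B0 where B0: "B0 \<subseteq> ?vF ` A" "fvs.independent B0" "?vF ` A \<subseteq> fvs.span B0"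
    by (rule fvs.maximal_independent_subset)
  obtain B where BA: "B \<subseteq> A" and injB: "inj_on ?vF B" and B0_eq: "B0 = ?vF ` B"
    using B0(1) subset_image_inj by metis
  have finB: "finite B" using BA finA finite_subset by auto
  have fiB: "lin_indep ?vF B" using finB injB B0_eq B0(2) by (simp add: lin_indep_iff)
  have spB: "?vF ` C \<subseteq> fvs.span (?vF ` B)"
    using spFA fvs.span_minimal[OF B0(3)] B0_eq by auto
  have bB: "max_indep ?vF C B"
    using BA AC by (intro spanning_indep_is_max_indep[OF _ fiB spB]) auto
  have "unit_vec f0 \<in> fvs.span (v ` A)"
    using uf fvs.span_minimal[OF spA] by auto
  hence "B \<noteq> A" using unit_vec_not_in_span[OF fiB] by auto
  moreover have "card A \<le> card B + 1" by (rule card_le_drop_basis[OF finB spB AC fiA])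
  moreover have "card B \<le> card A" by (rule card_mono[OF finA BA])
  moreover have "card B \<noteq> card A" using card_seteq[OF finA BA] \<open>B \<noteq> A\<close> by auto
  ultimately have "card (A - B) = 1" using card_Diff_subset[OF finB BA] by linarith
  then obtain c where "A - B = {c}" by (rule card_1_singletonE)
  hence "A = insert c B" "c \<notin> B" using BA by auto
  thus ?thesis using that bB by blast
qed

theorem bases_after_dropping_coord:
  assumes uf: "unit_vec f0 \<in> fvs.span (v ` C)"
  shows "{A. max_indep v C A} =
    {insert c B | c B. c \<in> C \<and> max_indep (drop_family v f0) C B \<and>
       (\<Sum>b\<in>B. coeffs (drop_family v f0) B c b * v b f0) \<noteq> v c f0}"
proof (intro equalityI subsetI)
  fix A assume "A \<in> {A. max_indep v C A}"
  hence bA: "max_indep v C A" by simp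
  obtain c B where A: "A = insert c B" "c \<notin> B" and bB: "max_indep (drop_family v f0) C B"
    by (rule max_indep_split[OF uf bA])
  have cC: "c \<in> C" using bA A by (simp add: max_indep_def)
  have fiB: "lin_indep v B" using bB lin_indep_drop_lift[of v f0 B] by (simp add: max_indep_def)
  have "lin_indep v (insert c B)" using bA A(1) by (simp add: max_indep_def)
  hence "v c \<notin> fvs.span (v ` B)" using lin_indep_insert_iff[OF fiB A(2)] by simp
  thus "A \<in> {insert c B | c B. c \<in> C \<and> max_indep (drop_family v f0) C B \<and>
       (\<Sum>b\<in>B. coeffs (drop_family v f0) B c b * v b f0) \<noteq> v c f0}"
    using A cC bB coeffs_mismatch_iff[OF bB cC] by blast
next
  fix A assume "A \<in> {insert c B | c B. c \<in> C \<and> max_indep (drop_family v f0) C B \<and>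
       (\<Sum>b\<in>B. coeffs (drop_family v f0) B c b * v b f0) \<noteq> v c f0}"
  then obtain c B where A: "A = insert c B" and cC: "c \<in> C"
    and bB: "max_indep (drop_family v f0) C B"
    and "(\<Sum>b\<in>B. coeffs (drop_family v f0) B c b * v b f0) \<noteq> v c f0" by blast
  hence nsp: "v c \<notin> fvs.span (v ` B)" using coeffs_mismatch_iff[OF bB cC] by simp
  have BC: "B \<subseteq> C" and fiB: "lin_indep v B"
    using bB lin_indep_drop_lift[of v f0 B] by (auto simp: max_indep_def)
  have finB: "finite B" using fiB by (simp add: lin_indep_def)
  have cB: "c \<notin> B" using nsp fvs.span_base[of "v c" "v ` B"] by auto
  have fiA: "lin_indep v A" using lin_indep_insert_iff[OF fiB cB] nsp A by simp
  have spB: "drop_family v f0 ` C \<subseteq> fvs.span (drop_family v f0 ` B)"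
    by (rule max_indep_spans[OF bB])
  have "max_indep v C A"
  proof (rule max_indep_by_card)
    show "A \<subseteq> C" "lin_indep v A" using A cC BC fiA by auto
    fix A' assume "A' \<subseteq> C" "lin_indep v A'"
    thus "card A' \<le> card A"
      using card_le_drop_basis[OF finB spB] A cB finB by simp
  qed
  thus "A \<in> {A. max_indep v C A}" by simp
qed

section \<open>Connectivity and paths in graphs\<close>

definition conn :: "'v set set \<Rightarrow> 'v \<Rightarrow> 'v \<Rightarrow> bool" where
  "conn G = (\<lambda>x y. {x, y} \<in> G)\<^sup>*\<^sup>*"

lemma conn_refl[simp]: "conn G x x"
  by (simp add: conn_def)

lemma conn_step: "{x, y} \<in> G \<Longrightarrow> conn G x y"
  unfolding conn_def by (rule r_into_rtranclp)

lemma conn_trans: "conn G x y \<Longrightarrow> conn G y z \<Longrightarrow> conn G x z"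
  unfolding conn_def by (rule rtranclp_trans)

lemma conn_sym: "conn G x y \<Longrightarrow> conn G y x"
  unfolding conn_def
proof (induction rule: rtranclp_induct)
  case base thus ?case by simp
next
  case (step y z)
  have "{z, y} \<in> G" using step(2) by (simp add: insert_commute)
  thus ?case using step(3) by (rule converse_rtranclp_into_rtranclp)
qed

lemma is_path_single: "is_path G [u] u u"
  by (simp add: is_path_def)

lemma is_path_take:
  assumes "is_path G p u w" "i < length p"
  shows "is_path G (take (Suc i) p) u (p ! i)"
proof -
  have ne: "take (Suc i) p \<noteq> []" using assms(2) by (cases p) auto
  have "hd (take (Suc i) p) = hd p" using assms(2) by (cases p) auto
  moreover have "last (take (Suc i) p) = p ! i"
    using assms(2) ne by (auto simp: last_conv_nth min_def intro: arg_cong[where f="nth p"])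
  moreover have "distinct (take (Suc i) p)" using assms(1) by (simp add: is_path_def)
  moreover have "\<forall>j. Suc j < length (take (Suc i) p) \<longrightarrow> {take (Suc i) p ! j, take (Suc i) p ! Suc j} \<in> G"
    using assms by (auto simp: is_path_def)
  ultimately show ?thesis using assms ne by (simp add: is_path_def)
qed

lemma is_path_snoc:
  assumes "is_path G p u w" "v \<notin> set p" "{w, v} \<in> G"
  shows "is_path G (p @ [v]) u v"
  using assms unfolding is_path_def
proof (intro conjI allI impI)
  fix i assume h: "p \<noteq> [] \<and> hd p = u \<and> last p = w \<and> distinct p \<and> (\<forall>i. Suc i < length p \<longrightarrow> {p ! i, p ! Suc i} \<in> G)"
    "v \<notin> set p" "{w, v} \<in> G" "Suc i < length (p @ [v])"
  show "{(p @ [v]) ! i, (p @ [v]) ! Suc i} \<in> G"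
  proof (cases "Suc i < length p")
    case True thus ?thesis using h by (simp add: nth_append)
  next
    case False
    hence "Suc i = length p" using h by simp
    moreover have "p ! i = last p" using h \<open>Suc i = length p\<close> by (metis diff_Suc_1 last_conv_nth)
    ultimately show ?thesis using h by (simp add: nth_append)
  qed
qed auto

lemma conn_imp_path: "conn G u v \<Longrightarrow> \<exists>p. is_path G p u v"
  unfolding conn_def
proof (induction rule: rtranclp_induct)
  case base thus ?case using is_path_single[of G u] by blast
next
  case (step w v)
  then obtain p where p: "is_path G p u w" by blast
  show ?case
  proof (cases "v \<in> set p")
    case True
    then obtain i where "i < length p" "p ! i = v" by (auto simp: in_set_conv_nth)
    thus ?thesis using is_path_take[OF p] by metis
  next
    case False
    thus ?thesis using is_path_snoc[OF p False step(2)] by blast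
  qed
qed

lemma path_conn_nth: "is_path G p u v \<Longrightarrow> k < length p \<Longrightarrow> conn G u (p ! k)"
proof (induction k)
  case 0 thus ?case by (simp add: is_path_def hd_conv_nth[symmetric])
next
  case (Suc k)
  hence "conn G u (p ! k)" by simp
  moreover have "{p ! k, p ! Suc k} \<in> G" using Suc.prems by (simp add: is_path_def)
  ultimately show ?case by (blast intro: conn_trans conn_step)
qed

lemma path_imp_conn: "is_path G p u v \<Longrightarrow> conn G u v"
proof -
  assume h: "is_path G p u v"
  hence "p \<noteq> []" "last p = v" by (auto simp: is_path_def)
  hence "v = p ! (length p - 1)" by (simp add: last_conv_nth)
  thus ?thesis using path_conn_nth[OF h, of "length p - 1"] \<open>p \<noteq> []\<close> by simp
qed

lemma path_edges_sub: "is_path G p u v \<Longrightarrow> path_edges p \<subseteq> G"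
  by (auto simp: is_path_def path_edges_def)

lemma is_path_mono: "is_path G p u v \<Longrightarrow> path_edges p \<subseteq> G' \<Longrightarrow> is_path G' p u v"
  by (auto simp: is_path_def path_edges_def)


lemma two_edges:
  assumes "degree E v \<ge> 2"
  obtains e1 e2 where "e1 \<in> E" "e2 \<in> E" "v \<in> e1" "v \<in> e2" "e1 \<noteq> e2"
proof -
  from assms obtain e1 S where S: "{e \<in> E. v \<in> e} = insert e1 S" "e1 \<notin> S" "1 \<le> card S"
    using card_le_Suc_iff[of 1 "{e \<in> E. v \<in> e}"] by (auto simp: degree_def)
  then obtain e2 where "e2 \<in> S" by fastforce
  with S show ?thesis using that by blast
qed


section \<open>Paths in trees\<close>

context
  fixes V :: "'v set" and E :: "'v set set"
  assumes tree: "is_tree V E"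
begin

lemma finite_V: "finite V" using tree by (simp add: is_tree_def)

lemma edge_endpoints: "e \<in> E \<Longrightarrow> \<exists>x y. x \<noteq> y \<and> x \<in> V \<and> y \<in> V \<and> e = {x, y}"
  using tree by (simp add: is_tree_def)

lemma E_subset_Pow: "E \<subseteq> Pow V" using edge_endpoints by blast

lemma finite_E: "finite E" by (rule finite_subset[OF E_subset_Pow]) (simp add: finite_V)

lemma path_ex1: "u \<in> V \<Longrightarrow> v \<in> V \<Longrightarrow> \<exists>!p. is_path E p u v"
  using tree by (simp add: is_tree_def)

lemma path_ex: "u \<in> V \<Longrightarrow> v \<in> V \<Longrightarrow> is_path E (THE p. is_path E p u v) u v"
  using path_ex1 by (rule theI')

lemma path_uniq: "u \<in> V \<Longrightarrow> v \<in> V \<Longrightarrow> is_path E p u v \<Longrightarrow> (THE p. is_path E p u v) = p"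
  using path_ex1 by (blast intro: the1_equality)

lemma E_path_eq: "u \<in> V \<Longrightarrow> v \<in> V \<Longrightarrow> is_path E p u v \<Longrightarrow> E_path E u v = path_edges p"
  using path_uniq by (simp add: E_path_def)

lemma E_path_subset: "u \<in> V \<Longrightarrow> v \<in> V \<Longrightarrow> E_path E u v \<subseteq> E"
  unfolding E_path_def by (rule path_edges_sub[OF path_ex])

lemma E_path_cut: "u \<in> V \<Longrightarrow> v \<in> V \<Longrightarrow> e \<in> E_path E u v \<longleftrightarrow> e \<in> E \<and> \<not> conn (E - {e}) u v"
proof
  assume uv: "u \<in> V" "v \<in> V" and e: "e \<in> E_path E u v"
  have "e \<in> E" using e E_path_subset[OF uv] by auto
  moreover have "\<not> conn (E - {e}) u v"
  proof
    assume "conn (E - {e}) u v"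
    from conn_imp_path[OF this] obtain p where p: "is_path (E - {e}) p u v" by blast
    hence "is_path E p u v" by (rule is_path_mono) (use path_edges_sub[OF p] in auto)
    hence "E_path E u v = path_edges p" by (rule E_path_eq[OF uv])
    with path_edges_sub[OF p] e show False by auto
  qed
  ultimately show "e \<in> E \<and> \<not> conn (E - {e}) u v" by simp
next
  assume uv: "u \<in> V" "v \<in> V" and h: "e \<in> E \<and> \<not> conn (E - {e}) u v"
  show "e \<in> E_path E u v"
  proof (rule ccontr)
    assume ne: "e \<notin> E_path E u v"
    let ?p = "THE p. is_path E p u v"
    have p: "is_path E ?p u v" using path_ex uv by blast
    have "path_edges ?p \<subseteq> E - {e}" using ne path_edges_sub[OF p] by (auto simp: E_path_def)
    hence "is_path (E - {e}) ?p u v" by (rule is_path_mono[OF p])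
    hence "conn (E - {e}) u v" by (rule path_imp_conn)
    with h show False by simp
  qed
qed

lemma tree_connected: "u \<in> V \<Longrightarrow> v \<in> V \<Longrightarrow> conn E u v"
  by (rule path_imp_conn[OF path_ex])

lemma conn_across_edge:
  assumes "{p, q} \<in> E" "x \<in> V"
  shows "conn (E - {{p, q}}) x p \<or> conn (E - {{p, q}}) x q"
proof -
  let ?G = "E - {{p, q}}"
  have "p \<in> V" using assms(1) E_subset_Pow by auto
  have gen: "conn E x y \<Longrightarrow> conn ?G x y \<or> conn ?G x p \<or> conn ?G x q" for y
    unfolding conn_def[of E]
  proof (induction rule: rtranclp_induct)
    case base thus ?case by simp
  next
    case (step y z)
    show ?case
    proof (cases "conn ?G x y")
      case True
      show ?thesis
      proof (cases "{y, z} = {p, q}")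
        case True
        hence "y = p \<or> y = q" by (auto simp: doubleton_eq_iff)
        thus ?thesis using \<open>conn ?G x y\<close> by auto
      next
        case False
        hence "{y, z} \<in> ?G" using step(2) by auto
        hence "conn ?G x z" using conn_trans[OF True conn_step] by blast
        thus ?thesis by simp
      qed
    next
      case False thus ?thesis using step(3) by simp
    qed
  qed
  from gen[OF tree_connected[OF assms(2) \<open>p \<in> V\<close>]] show ?thesis by auto
qed

lemma E_path_edge:
  assumes "{p, q} \<in> E" "p \<noteq> q"
  shows "E_path E p q = {{p, q}}"
proof -
  have pq: "p \<in> V" "q \<in> V" using assms(1) E_subset_Pow by auto
  have "is_path E [p, q] p q" using assms by (auto simp: is_path_def less_Suc_eq)
  hence "E_path E p q = path_edges [p, q]" by (rule E_path_eq[OF pq])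
  also have "\<dots> = {{p, q}}" by (auto simp: path_edges_def less_Suc_eq)
  finally show ?thesis .
qed

lemma edge_disconnects:
  assumes "{p, q} \<in> E" "p \<noteq> q"
  shows "\<not> conn (E - {{p, q}}) p q"
proof -
  have pq: "p \<in> V" "q \<in> V" using assms(1) E_subset_Pow by auto
  have "{p, q} \<in> E_path E p q" using E_path_edge[OF assms] by simp
  thus ?thesis using E_path_cut[OF pq, of "{p, q}"] by simp
qed

lemma E_path_sym:
  assumes "u \<in> V" "v \<in> V" shows "E_path E u v = E_path E v u"
proof (rule set_eqI)
  fix e
  have "conn (E - {e}) u v \<longleftrightarrow> conn (E - {e}) v u"
    using conn_sym[of "E - {e}" u v] conn_sym[of "E - {e}" v u] by blast
  thus "e \<in> E_path E u v \<longleftrightarrow> e \<in> E_path E v u"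
    unfolding E_path_cut[OF assms] E_path_cut[OF assms(2,1)] by simp
qed

lemma same_side_iff:
  assumes pq: "{p, q} \<in> E" "p \<noteq> q" and xy: "x \<in> V" "y \<in> V"
  shows "conn (E - {{p, q}}) x y \<longleftrightarrow> (conn (E - {{p, q}}) x p \<longleftrightarrow> conn (E - {{p, q}}) y p)"
proof -
  let ?G = "E - {{p, q}}"
  have sx: "conn ?G x p \<or> conn ?G x q" and sy: "conn ?G y p \<or> conn ?G y q"
    using conn_across_edge[OF pq(1)] xy by auto
  have npq: "\<not> conn ?G p q" by (rule edge_disconnects[OF pq])
  show ?thesis
  proof
    assume "conn ?G x y"
    thus "conn ?G x p \<longleftrightarrow> conn ?G y p" by (meson conn_sym conn_trans)
  next
    assume "conn ?G x p \<longleftrightarrow> conn ?G y p"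
    thus "conn ?G x y" using sx sy npq by (meson conn_sym conn_trans)
  qed
qed

lemma E_path_xor:
  assumes "u \<in> V" "v \<in> V" "w \<in> V"
  shows "(e \<in> E_path E u w) = ((e \<in> E_path E u v) \<noteq> (e \<in> E_path E v w))"
proof (cases "e \<in> E")
  case False
  thus ?thesis using E_path_subset[OF assms(1,3)] E_path_subset[OF assms(1,2)]
      E_path_subset[OF assms(2,3)] by auto
next
  case True
  from edge_endpoints[OF True] obtain p q where pq: "p \<noteq> q" "e = {p, q}" by blast
  have e: "{p, q} \<in> E" using True pq by simp
  have "e \<in> E_path E u w \<longleftrightarrow> \<not> conn (E - {e}) u w" using E_path_cut[OF assms(1,3)] True by simp
  moreover have "e \<in> E_path E u v \<longleftrightarrow> \<not> conn (E - {e}) u v" using E_path_cut[OF assms(1,2)] True by simp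
  moreover have "e \<in> E_path E v w \<longleftrightarrow> \<not> conn (E - {e}) v w" using E_path_cut[OF assms(2,3)] True by simp
  moreover note same_side_iff[OF e pq(1) assms(1,3)] same_side_iff[OF e pq(1) assms(1,2)]
    same_side_iff[OF e pq(1) assms(2,3)]
  ultimately show ?thesis unfolding pq(2) by blast
qed

lemma E_path_via:
  assumes "u \<in> V" "w \<in> V" "z \<in> V"
  shows "(e \<in> E_path E u w) = ((e \<in> E_path E u z) \<noteq> (e \<in> E_path E w z))"
  using E_path_xor[OF assms(1,3,2), of e] E_path_sym[OF assms(2,3)] by simp

lemma path_edge_endpoints_conn:
  assumes "G \<subseteq> E" "conn G u v" "u \<in> V" "v \<in> V" "e \<in> E_path E u v" "x \<in> e"
  shows "conn G u x"
proof -
  from conn_imp_path[OF assms(2)] obtain p where p: "is_path G p u v" by blast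
  have "is_path E p u v" using path_edges_sub[OF p] assms(1) by (intro is_path_mono[OF p]) auto
  hence "E_path E u v = path_edges p" by (rule E_path_eq[OF assms(3) assms(4)])
  then obtain i where i: "Suc i < length p" "e = {p ! i, p ! Suc i}"
    using assms(5) by (auto simp: path_edges_def)
  hence "x = p ! i \<or> x = p ! Suc i" using assms(6) by auto
  thus ?thesis using path_conn_nth[OF p] i by auto
qed

lemma one_edge_at_end:
  assumes xv: "x \<in> V" "v \<in> V"
    and g1: "{v, z1} \<in> E_path E x v" and g2: "{v, z2} \<in> E_path E x v"
    and "z1 \<noteq> v" "z2 \<noteq> v"
  shows "z1 = z2"
proof (rule ccontr)
  assume ne: "z1 \<noteq> z2"
  have inE: "{v, z1} \<in> E" "{v, z2} \<in> E" using g1 g2 E_path_subset xv by auto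
  hence z: "z1 \<in> V" "z2 \<in> V" using E_subset_Pow by auto
  have ep1: "E_path E v z1 = {{v, z1}}" using E_path_edge inE assms by auto
  have neq: "{v, z2} \<noteq> {v, z1}" using ne assms by (auto simp: doubleton_eq_iff)
  have "({v, z1} \<in> E_path E x z1) = (({v, z1} \<in> E_path E x v) \<noteq> ({v, z1} \<in> E_path E v z1))"
    by (rule E_path_xor) (use xv z in auto)
  hence n1: "{v, z1} \<notin> E_path E x z1" using g1 ep1 by simp
  have "({v, z2} \<in> E_path E x z1) = (({v, z2} \<in> E_path E x v) \<noteq> ({v, z2} \<in> E_path E v z1))"
    by (rule E_path_xor) (use xv z in auto)
  hence n2: "{v, z2} \<in> E_path E x z1" using g2 ep1 neq by simp
  have c: "conn (E - {{v, z1}}) x z1" using n1 E_path_cut[OF xv(1) z(1)] inE by simp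
  have "conn (E - {{v, z1}}) x v"
    by (rule path_edge_endpoints_conn[OF _ c xv(1) z(1) n2]) auto
  hence "conn (E - {{v, z1}}) v z1" using c by (meson conn_sym conn_trans)
  thus False using edge_disconnects[OF inE(1)] assms by auto
qed

lemma edge_other_end: "e \<in> E \<Longrightarrow> v \<in> e \<Longrightarrow> \<exists>z. z \<noteq> v \<and> z \<in> V \<and> e = {v, z}"
  using edge_endpoints by (metis insert_commute insertE singletonD)

lemma path_enters_via_edge:
  assumes g: "{v, w} \<in> E" "v \<noteq> w" and x: "x \<in> V" and c: "conn (E - {{v, w}}) x w"
  shows "{v, w} \<in> E_path E x v"
    and "\<And>h. h \<in> E_path E x v \<Longrightarrow> h \<noteq> {v, w} \<Longrightarrow> v \<notin> h"
    and "\<And>h z. h \<in> E_path E x v \<Longrightarrow> h \<noteq> {v, w} \<Longrightarrow> z \<in> h \<Longrightarrow> conn (E - {{v, w}}) z w"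
proof -
  have vw: "v \<in> V" "w \<in> V" using g E_subset_Pow by auto
  have nc: "\<not> conn (E - {{v, w}}) v w" by (rule edge_disconnects[OF g])
  have "\<not> conn (E - {{v, w}}) x v"
  proof
    assume "conn (E - {{v, w}}) x v"
    hence "conn (E - {{v, w}}) v x" by (rule conn_sym)
    hence "conn (E - {{v, w}}) v w" using c by (rule conn_trans)
    with nc show False ..
  qed
  thus i: "{v, w} \<in> E_path E x v" using E_path_cut[OF x vw(1)] g by simp
  show "v \<notin> h" if h: "h \<in> E_path E x v" "h \<noteq> {v, w}" for h
  proof
    assume "v \<in> h"
    have "h \<in> E" using h E_path_subset[OF x vw(1)] by auto
    then obtain z where z: "z \<noteq> v" "h = {v, z}" using edge_other_end \<open>v \<in> h\<close> by blast
    have "w = z" by (rule one_edge_at_end[OF x vw(1) i]) (use h z g in auto)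
    with z h show False by simp
  qed
  show "conn (E - {{v, w}}) z w" if h: "h \<in> E_path E x v" "h \<noteq> {v, w}" "z \<in> h" for h z
  proof -
    have ew: "E_path E v w = {{v, w}}" by (rule E_path_edge[OF g])
    have "(h \<in> E_path E x w) = ((h \<in> E_path E x v) \<noteq> (h \<in> E_path E v w))"
      by (rule E_path_xor[OF x vw(1) vw(2)])
    hence hw: "h \<in> E_path E x w" using h ew by simp
    have "conn (E - {{v, w}}) x z" by (rule path_edge_endpoints_conn[OF _ c x vw(2) hw h(3)]) auto
    hence "conn (E - {{v, w}}) z x" by (rule conn_sym)
    thus ?thesis using c by (rule conn_trans)
  qed
qed

lemma E_path_self: "u \<in> V \<Longrightarrow> E_path E u u = {}"
  using E_path_eq[of u u "[u]"] is_path_single[of E u] by (simp add: path_edges_def)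

lemma branch_paths_disjoint:
  assumes g1: "{v, w1} \<in> E" "v \<noteq> w1" and g2: "{v, w2} \<in> E" "v \<noteq> w2" and w: "w1 \<noteq> w2"
    and x: "x1 \<in> V" "x2 \<in> V"
    and c1: "conn (E - {{v, w1}}) x1 w1" and c2: "conn (E - {{v, w2}}) x2 w2"
  shows "E_path E x1 v \<inter> E_path E x2 v = {}"
proof (rule equals0I)
  fix e assume "e \<in> E_path E x1 v \<inter> E_path E x2 v"
  hence e1: "e \<in> E_path E x1 v" and e2: "e \<in> E_path E x2 v" by auto
  have v: "v \<in> V" using g1 E_subset_Pow by auto
  have ne: "{v, w1} \<noteq> {v, w2}" using w by (auto simp: doubleton_eq_iff)
  have F1: "e \<noteq> {v, w1}" using path_enters_via_edge(2)[OF g2 x(2) c2 e2] ne by auto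
  have F2: "e \<noteq> {v, w2}" using path_enters_via_edge(2)[OF g1 x(1) c1 e1] ne by auto
  have "e \<in> E" using e1 E_path_subset[OF x(1) v] by auto
  then obtain z z' where z: "z \<in> V" "e = {z, z'}" using edge_endpoints by blast
  have "z \<in> e" using z by simp
  have cz1: "conn (E - {{v, w1}}) z w1" by (rule path_enters_via_edge(3)[OF g1 x(1) c1 e1 F1 \<open>z \<in> e\<close>])
  have cz2: "conn (E - {{v, w2}}) z w2" by (rule path_enters_via_edge(3)[OF g2 x(2) c2 e2 F2 \<open>z \<in> e\<close>])
  have i1: "{v, w1} \<in> E_path E z v" by (rule path_enters_via_edge(1)[OF g1 z(1) cz1])
  have i2: "{v, w2} \<in> E_path E z v" by (rule path_enters_via_edge(1)[OF g2 z(1) cz2])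
  have "w1 = w2" by (rule one_edge_at_end[OF z(1) v i1 i2]) (use g1 g2 in auto)
  with w show False by simp
qed

lemma paths_across_edge_disjoint:
  assumes f: "{p, q} \<in> E" "p \<noteq> q" and x: "x \<in> V" "y \<in> V"
    and fx: "{p, q} \<notin> E_path E x p" and fy: "{p, q} \<notin> E_path E y q"
  shows "E_path E x p \<inter> E_path E y q = {}"
proof (rule equals0I)
  fix e assume "e \<in> E_path E x p \<inter> E_path E y q"
  hence e1: "e \<in> E_path E x p" and e2: "e \<in> E_path E y q" by auto
  let ?G = "E - {{p, q}}"
  have pq: "p \<in> V" "q \<in> V" using f E_subset_Pow by auto
  have cx: "conn ?G x p" using fx E_path_cut[OF x(1) pq(1)] f by simp
  have cy: "conn ?G y q" using fy E_path_cut[OF x(2) pq(2)] f by simp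
  have "e \<in> E" using e1 E_path_subset[OF x(1) pq(1)] by auto
  then obtain z z' where z: "e = {z, z'}" using edge_endpoints by blast
  have "z \<in> e" using z by simp
  have "conn ?G x z" by (rule path_edge_endpoints_conn[OF _ cx x(1) pq(1) e1 \<open>z \<in> e\<close>]) auto
  hence pz: "conn ?G p z" using conn_sym[OF cx] by (rule conn_trans[rotated])
  have "conn ?G y z" by (rule path_edge_endpoints_conn[OF _ cy x(2) pq(2) e2 \<open>z \<in> e\<close>]) auto
  hence "conn ?G z q" using cy by (rule conn_trans[OF conn_sym])
  hence "conn ?G p q" using pz by (rule conn_trans[rotated])
  thus False using edge_disconnects[OF f] by simp
qed

lemma edge_away_from:
  assumes yv: "y \<in> V" "v \<in> V" and d: "degree E y \<ge> 2"
  obtains z where "{y, z} \<in> E" "z \<noteq> y" "z \<in> V" "{y, z} \<notin> E_path E y v"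
proof -
  obtain e1 e2 where e: "e1 \<in> E" "e2 \<in> E" "y \<in> e1" "y \<in> e2" "e1 \<noteq> e2"
    using two_edges[OF d] .
  obtain z1 where z1: "z1 \<noteq> y" "z1 \<in> V" "e1 = {y, z1}" using edge_other_end[OF e(1) e(3)] by blast
  obtain z2 where z2: "z2 \<noteq> y" "z2 \<in> V" "e2 = {y, z2}" using edge_other_end[OF e(2) e(4)] by blast
  have "z1 \<noteq> z2" using z1 z2 e by auto
  hence "\<not> (e1 \<in> E_path E v y \<and> e2 \<in> E_path E v y)"
    using one_edge_at_end[OF yv(2,1), of z1 z2] z1 z2 by auto
  thus ?thesis using that e z1 z2 E_path_sym[OF yv] by metis
qed

lemma E_path_step:
  assumes yv: "y \<in> V" "v \<in> V" and z: "{y, z} \<in> E" "z \<noteq> y" "z \<in> V"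
    and away: "{y, z} \<notin> E_path E y v"
  shows "E_path E z v = insert {y, z} (E_path E y v)"
proof (rule set_eqI)
  fix e
  have ezy: "E_path E z y = {{y, z}}"
    using E_path_edge[of z y] z by (simp add: insert_commute)
  have "(e \<in> E_path E z v) = ((e \<in> E_path E z y) \<noteq> (e \<in> E_path E y v))"
    by (rule E_path_xor[OF z(3) yv])
  thus "e \<in> E_path E z v \<longleftrightarrow> e \<in> insert {y, z} (E_path E y v)" using ezy away by auto
qed

end

section \<open>X-trees\<close>

context
  fixes X V :: "'v set" and E :: "'v set set"
  assumes xt: "is_X_tree X V E"
begin

lemma X_tree_is_tree: "is_tree V E"
  using xt by (simp add: is_X_tree_def)

lemma X_is_leaves: "X = {v \<in> V. degree E v = 1}"
  using xt by (simp add: is_X_tree_def)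

lemma leaves_subset_V: "X \<subseteq> V"
  using X_is_leaves by auto

lemma no_degree_2: "v \<in> V \<Longrightarrow> degree E v \<noteq> 2"
  using xt by (simp add: is_X_tree_def)

lemma degree_pos: "e \<in> E \<Longrightarrow> v \<in> e \<Longrightarrow> degree E v \<noteq> 0"
  using finite_E[OF X_tree_is_tree] by (auto simp: degree_def)

text \<open>Behind every edge {v, w} (on the w-side) there is a leaf: a vertex on that side
  farthest from v cannot have degree at least two, since an edge leading away from v would
  reach a vertex still farther away.\<close>
lemma leaf_behind_edge:
  assumes g: "{v, w} \<in> E" "v \<noteq> w"
  shows "\<exists>a\<in>X. conn (E - {{v, w}}) a w"
proof -
  note tr = X_tree_is_tree
  let ?G = "E - {{v, w}}"
  let ?S = "{y \<in> V. conn ?G y w}"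
  let ?h = "\<lambda>y. card (E_path E y v)"
  have vw: "v \<in> V" "w \<in> V" using g E_subset_Pow[OF tr] by auto
  have finS: "finite ?S" using finite_V[OF tr] by simp
  obtain y where yS: "y \<in> ?S" and maxh: "\<And>z. z \<in> ?S \<Longrightarrow> ?h z \<le> ?h y"
    using Max_in[of "?h ` ?S"] Max_ge[of "?h ` ?S"] finS vw by fastforce
  have yV: "y \<in> V" and cy: "conn ?G y w" using yS by auto
  have yv: "y \<noteq> v" using cy edge_disconnects[OF tr g] by auto
  have d0: "degree E y \<noteq> 0"
  proof (cases "y = w")
    case False
    from cy[unfolded conn_def] obtain z where "{y, z} \<in> ?G"
      using False by (cases rule: converse_rtranclpE) auto
    hence "{y, z} \<in> E" by simp
    thus ?thesis using degree_pos[of "{y, z}" y] by simp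
  qed (use degree_pos g in auto)
  have "degree E y = 1"
  proof (rule ccontr)
    assume "degree E y \<noteq> 1"
    hence "degree E y \<ge> 2" using d0 no_degree_2[OF yV] by linarith
    then obtain z where z: "{y, z} \<in> E" "z \<noteq> y" "z \<in> V" and away: "{y, z} \<notin> E_path E y v"
      using edge_away_from[OF tr yV vw(1)] by blast
    have "{y, z} \<noteq> {v, w}"
    proof
      assume eq: "{y, z} = {v, w}"
      hence "y = w" "z = v" using yv by (auto simp: doubleton_eq_iff)
      hence "{y, z} \<in> E_path E y v" using E_path_edge[OF tr, of w v] g by (simp add: insert_commute)
      with away show False by simp
    qed
    hence "conn ?G z y" using z(1) by (simp add: insert_commute conn_step)
    hence zS: "z \<in> ?S" using conn_trans[OF _ cy] z(3) by simp
    have "finite (E_path E y v)"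
      using E_path_subset[OF tr yV vw(1)] finite_E[OF tr] finite_subset by auto
    hence "?h z = ?h y + 1" using E_path_step[OF tr yV vw(1) z away] away by simp
    with maxh[OF zS] show False by simp
  qed
  hence "y \<in> X" using yV X_is_leaves by simp
  thus ?thesis using cy by blast
qed

text \<open>An interior vertex has degree at least three, so besides any given incident edge e0
  it has two more.\<close>
lemma interior_vertex_other_edges:
  assumes "v \<in> V" "v \<notin> X" "e0 \<in> E" "v \<in> e0"
  obtains z1 z2 where "{v, z1} \<in> E" "{v, z2} \<in> E" "z1 \<noteq> z2" "z1 \<noteq> v" "z2 \<noteq> v"
    "{v, z1} \<noteq> e0" "{v, z2} \<noteq> e0"
proof -
  let ?S = "{e \<in> E. v \<in> e}"
  have "degree E v \<noteq> 1" "degree E v \<noteq> 0" "degree E v \<noteq> 2"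
    using assms X_is_leaves degree_pos no_degree_2 by auto
  hence "card ?S \<ge> 3" by (simp add: degree_def)
  moreover have "{e \<in> E - {e0}. v \<in> e} = ?S - {e0}" by auto
  moreover have "finite ?S" using finite_E[OF X_tree_is_tree] by simp
  ultimately have "degree (E - {e0}) v \<ge> 2"
    using assms by (simp add: degree_def card_Diff_singleton)
  then obtain e1 e2 where e: "e1 \<in> E - {e0}" "e2 \<in> E - {e0}" "v \<in> e1" "v \<in> e2" "e1 \<noteq> e2"
    by (rule two_edges)
  obtain z1 where z1: "z1 \<noteq> v" "e1 = {v, z1}" using edge_other_end[OF X_tree_is_tree, of e1 v] e by auto
  obtain z2 where z2: "z2 \<noteq> v" "e2 = {v, z2}" using edge_other_end[OF X_tree_is_tree, of e2 v] e by auto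
  show ?thesis using that e z1 z2 by auto
qed

text \<open>Around an interior edge f = {p, q} there are four leaves: a and b behind two different
  further edges at p, c and d behind two different further edges at q.\<close>
lemma leaves_around_interior_edge:
  assumes f: "f \<in> E" "f \<inter> X = {}"
  obtains p q a b c d where "f = {p, q}" "p \<noteq> q" "p \<in> V" "q \<in> V"
    "a \<in> X" "b \<in> X" "c \<in> X" "d \<in> X"
    "f \<notin> E_path E a p" "f \<notin> E_path E b p" "f \<notin> E_path E c q" "f \<notin> E_path E d q"
    "E_path E a p \<inter> E_path E b p = {}" "E_path E c q \<inter> E_path E d q = {}"
    "E_path E a p \<inter> E_path E c q = {}" "E_path E a p \<inter> E_path E d q = {}"
    "E_path E b p \<inter> E_path E c q = {}" "E_path E b p \<inter> E_path E d q = {}"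
    "E_path E a p \<noteq> {}" "E_path E c q \<noteq> {}"
proof -
  note tr = X_tree_is_tree
  obtain p q where pq: "p \<noteq> q" "p \<in> V" "q \<in> V" "f = {p, q}"
    using edge_endpoints[OF tr f(1)] by blast
  have pX: "p \<notin> X" "q \<notin> X" and pf: "p \<in> f" and qf: "q \<in> f" using f(2) pq by auto
  obtain p1 p2 where P: "{p, p1} \<in> E" "{p, p2} \<in> E" "p1 \<noteq> p2" "p1 \<noteq> p" "p2 \<noteq> p"
    "{p, p1} \<noteq> f" "{p, p2} \<noteq> f"
    by (rule interior_vertex_other_edges[OF pq(2) pX(1) f(1) pf])
  obtain q1 q2 where Q: "{q, q1} \<in> E" "{q, q2} \<in> E" "q1 \<noteq> q2" "q1 \<noteq> q" "q2 \<noteq> q"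
    "{q, q1} \<noteq> f" "{q, q2} \<noteq> f"
    by (rule interior_vertex_other_edges[OF pq(3) pX(2) f(1) qf])
  obtain a where a: "a \<in> X" "conn (E - {{p, p1}}) a p1" using leaf_behind_edge[OF P(1)] P(4) by auto
  obtain b where b: "b \<in> X" "conn (E - {{p, p2}}) b p2" using leaf_behind_edge[OF P(2)] P(5) by auto
  obtain c where c: "c \<in> X" "conn (E - {{q, q1}}) c q1" using leaf_behind_edge[OF Q(1)] Q(4) by auto
  obtain d where d: "d \<in> X" "conn (E - {{q, q2}}) d q2" using leaf_behind_edge[OF Q(2)] Q(5) by auto
  have V: "a \<in> V" "b \<in> V" "c \<in> V" "d \<in> V" using a b c d leaves_subset_V by auto
  have fE: "{p, q} \<in> E" using f pq by simp
  have fa: "f \<notin> E_path E a p" using path_enters_via_edge(2)[OF tr P(1) _ V(1) a(2), of f] P pq by auto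
  have fb: "f \<notin> E_path E b p" using path_enters_via_edge(2)[OF tr P(2) _ V(2) b(2), of f] P pq by auto
  have fc: "f \<notin> E_path E c q" using path_enters_via_edge(2)[OF tr Q(1) _ V(3) c(2), of f] Q pq by auto
  have fd: "f \<notin> E_path E d q" using path_enters_via_edge(2)[OF tr Q(2) _ V(4) d(2), of f] Q pq by auto
  have "E_path E a p \<inter> E_path E b p = {}"
    by (rule branch_paths_disjoint[OF tr P(1) _ P(2) _ P(3) V(1) V(2) a(2) b(2)]) (use P in auto)
  moreover have "E_path E c q \<inter> E_path E d q = {}"
    by (rule branch_paths_disjoint[OF tr Q(1) _ Q(2) _ Q(3) V(3) V(4) c(2) d(2)]) (use Q in auto)
  moreover have "E_path E x p \<inter> E_path E y q = {}"
    if "x \<in> V" "y \<in> V" "f \<notin> E_path E x p" "f \<notin> E_path E y q" for x y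
    by (rule paths_across_edge_disjoint[OF tr fE pq(1) that(1,2)]) (use that pq in auto)
  moreover have "{p, p1} \<in> E_path E a p"
    by (rule path_enters_via_edge(1)[OF tr P(1) _ V(1) a(2)]) (use P in auto)
  moreover have "{q, q1} \<in> E_path E c q"
    by (rule path_enters_via_edge(1)[OF tr Q(1) _ V(3) c(2)]) (use Q in auto)
  ultimately show thesis
    using that[OF pq(4,1,2,3) a(1) b(1) c(1) d(1) fa fb fc fd] V fa fb fc fd by blast
qed

text \<open>The key identity: for the four leaves above,
  1_{E(a|c)} + 1_{E(b|d)} - 1_{E(a|b)} - 1_{E(c|d)} = 2 \<cdot> 1_{f}, because each of the
  paths a-c and b-d consists of the two arms to the endpoints of f together with f.\<close>
lemma quartet_around_edge:
  assumes f: "f \<in> E" "f \<inter> X = {}"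
  obtains a b c d where "a \<in> X" "b \<in> X" "c \<in> X" "d \<in> X" "a \<noteq> c" "b \<noteq> d" "a \<noteq> b" "c \<noteq> d"
    "\<And>e. (if e \<in> E_path E a c then 1 else 0) + (if e \<in> E_path E b d then 1 else 0)
       - (if e \<in> E_path E a b then 1 else 0) - (if e \<in> E_path E c d then 1 else 0)
       = (if e = f then 2 else (0::real))"
proof -
  note tr = X_tree_is_tree
  obtain p q a b c d where pq: "f = {p, q}" "p \<noteq> q" "p \<in> V" "q \<in> V"
    and X: "a \<in> X" "b \<in> X" "c \<in> X" "d \<in> X"
    and avoid: "f \<notin> E_path E a p" "f \<notin> E_path E b p" "f \<notin> E_path E c q" "f \<notin> E_path E d q"
    and disj: "E_path E a p \<inter> E_path E b p = {}" "E_path E c q \<inter> E_path E d q = {}"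
      "E_path E a p \<inter> E_path E c q = {}" "E_path E a p \<inter> E_path E d q = {}"
      "E_path E b p \<inter> E_path E c q = {}" "E_path E b p \<inter> E_path E d q = {}"
    and ne: "E_path E a p \<noteq> {}" "E_path E c q \<noteq> {}"
    by (rule leaves_around_interior_edge[OF f])
  have V: "a \<in> V" "b \<in> V" "c \<in> V" "d \<in> V" using X leaves_subset_V by auto
  have epq: "E_path E p q = {f}" using E_path_edge[OF tr] f pq by simp
  have across: "(e \<in> E_path E x y) = ((e \<in> E_path E x p) \<noteq> ((e = f) \<noteq> (e \<in> E_path E y q)))"
    if "x \<in> V" "y \<in> V" for x y e
    using E_path_via[OF tr that(1,2) pq(3), of e] E_path_via[OF tr that(2) pq(3,4), of e]
      E_path_sym[OF tr pq(3,4)] epq by auto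
  have Pab: "(e \<in> E_path E a b) = ((e \<in> E_path E a p) \<noteq> (e \<in> E_path E b p))" for e
    by (rule E_path_via[OF tr V(1,2) pq(3)])
  have Pcd: "(e \<in> E_path E c d) = ((e \<in> E_path E c q) \<noteq> (e \<in> E_path E d q))" for e
    by (rule E_path_via[OF tr V(3,4) pq(4)])
  have "f \<in> E_path E a c" "f \<in> E_path E b d"
    using across[OF V(1,3), of f] across[OF V(2,4), of f] avoid by auto
  hence "a \<noteq> c" "b \<noteq> d" using E_path_self[OF tr] V by auto
  moreover have "E_path E a b \<noteq> {}" "E_path E c d \<noteq> {}" using Pab Pcd ne disj(1,2) by blast+
  hence "a \<noteq> b" "c \<noteq> d" using E_path_self[OF tr] V by auto
  moreover have "(if e \<in> E_path E a c then 1 else 0) + (if e \<in> E_path E b d then 1 else 0)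
       - (if e \<in> E_path E a b then 1 else 0) - (if e \<in> E_path E c d then 1 else 0)
       = (if e = f then 2 else (0::real))" for e
  proof -
    have "\<not> (e \<in> E_path E a p \<and> e \<in> E_path E b p)" "\<not> (e \<in> E_path E c q \<and> e \<in> E_path E d q)"
      "\<not> (e \<in> E_path E a p \<and> e \<in> E_path E c q)" "\<not> (e \<in> E_path E a p \<and> e \<in> E_path E d q)"
      "\<not> (e \<in> E_path E b p \<and> e \<in> E_path E c q)" "\<not> (e \<in> E_path E b p \<and> e \<in> E_path E d q)"
      using disj by blast+
    moreover note across[OF V(1,3), of e] across[OF V(2,4), of e] Pab[of e] Pcd[of e]
    ultimately show ?thesis using avoid
      by (cases "e = f"; cases "e \<in> E_path E a p"; cases "e \<in> E_path E b p";
          cases "e \<in> E_path E c q"; cases "e \<in> E_path E d q") simp_all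
  qed
  ultimately show thesis using that X by blast
qed

end

section \<open>The matroids M(T) and M(T/f) as linear matroids of indicator vectors\<close>

definition indicator_vec :: "('c \<Rightarrow> 'e set) \<Rightarrow> 'c \<Rightarrow> 'e \<Rightarrow> real" where
  "indicator_vec P c = (\<lambda>e. if e \<in> P c then 1 else 0)"

lemma lam_as_pairing:
  assumes "finite E0" "P l \<subseteq> E0"
  shows "lam P l \<omega> = (\<Sum>e\<in>E0. \<omega> e * indicator_vec P l e)"
proof -
  have "(\<Sum>e\<in>E0. \<omega> e * indicator_vec P l e) = (\<Sum>e\<in>E0. if e \<in> P l then \<omega> e else 0)"
    by (rule sum.cong) (auto simp: indicator_vec_def)
  also have "\<dots> = (\<Sum>e\<in>E0 \<inter> P l. \<omega> e)" using assms(1) by (simp add: sum.If_cases)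
  also have "E0 \<inter> P l = P l" using assms(2) by auto
  finally show ?thesis by (simp add: lam_def)
qed

lemma lam_combination:
  assumes "finite E0" "\<forall>l\<in>L. P l \<subseteq> E0"
  shows "(\<Sum>l\<in>L. a l * lam P l \<omega>)
       = (\<Sum>e\<in>E0. \<omega> e * (\<Sum>l\<in>L. scale_fun (a l) (indicator_vec P l)) e)"
proof -
  have "(\<Sum>l\<in>L. a l * lam P l \<omega>) = (\<Sum>l\<in>L. \<Sum>e\<in>E0. a l * (\<omega> e * indicator_vec P l e))"
    using lam_as_pairing[OF assms(1)] assms(2) by (simp add: sum_distrib_left)
  also have "\<dots> = (\<Sum>e\<in>E0. \<Sum>l\<in>L. a l * (\<omega> e * indicator_vec P l e))" by (rule sum.swap)
  also have "\<dots> = (\<Sum>e\<in>E0. \<omega> e * (\<Sum>l\<in>L. scale_fun (a l) (indicator_vec P l)) e)"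
    by (simp add: sum_fun_apply scale_fun_apply sum_distrib_left algebra_simps)
  finally show ?thesis .
qed

lemma pairing_zero_iff:
  fixes w :: "'e \<Rightarrow> real"
  assumes "finite E0" "\<forall>e. e \<notin> E0 \<longrightarrow> w e = 0"
  shows "(\<forall>\<omega>. (\<Sum>e\<in>E0. \<omega> e * w e) = 0) \<longleftrightarrow> w = 0"
proof
  assume h: "\<forall>\<omega>. (\<Sum>e\<in>E0. \<omega> e * w e) = 0"
  show "w = 0"
  proof
    fix e0
    show "w e0 = 0 e0"
    proof (cases "e0 \<in> E0")
      case True
      have "(\<Sum>e\<in>E0. (if e = e0 then 1 else 0) * w e) = (\<Sum>e\<in>E0. if e = e0 then w e else 0)"
        by (rule sum.cong) auto
      thus ?thesis using h[rule_format, of "\<lambda>e. if e = e0 then 1 else 0"] True assms(1) by simp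
    qed (use assms(2) in simp)
  qed
qed simp

lemma combination_outside_support:
  assumes "\<forall>l\<in>L. P l \<subseteq> E0" "e \<notin> E0"
  shows "(\<Sum>l\<in>L. scale_fun (a l) (indicator_vec P l)) e = 0"
proof -
  have "\<forall>l\<in>L. e \<notin> P l" using assms by blast
  thus ?thesis by (simp add: sum_fun_apply scale_fun_apply indicator_vec_def)
qed

lemma indep_iff_lin_indep:
  assumes "finite E0" "\<forall>l\<in>L. P l \<subseteq> E0"
  shows "indep P L \<longleftrightarrow> lin_indep (indicator_vec P) L"
proof -
  have "(\<forall>\<omega>. (\<Sum>l\<in>L. a l * lam P l \<omega>) = 0) \<longleftrightarrow> (\<Sum>l\<in>L. scale_fun (a l) (indicator_vec P l)) = 0" for a
    unfolding lam_combination[OF assms]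
    by (rule pairing_zero_iff[OF assms(1)]) (use combination_outside_support[OF assms(2)] in blast)
  thus ?thesis by (simp add: indep_def lin_indep_def)
qed

lemma lam_identity_iff:
  assumes "finite E0" "\<forall>l\<in>B. P l \<subseteq> E0" "P c \<subseteq> E0"
  shows "(\<forall>\<omega>. lam P c \<omega> = (\<Sum>b\<in>B. r b * lam P b \<omega>))
     \<longleftrightarrow> indicator_vec P c = (\<Sum>b\<in>B. scale_fun (r b) (indicator_vec P b))"
proof -
  let ?w = "indicator_vec P c - (\<Sum>b\<in>B. scale_fun (r b) (indicator_vec P b))"
  have eq: "lam P c \<omega> - (\<Sum>b\<in>B. r b * lam P b \<omega>) = (\<Sum>e\<in>E0. \<omega> e * ?w e)" for \<omega>
    unfolding lam_combination[OF assms(1,2)] lam_as_pairing[of E0 P c, OF assms(1,3)]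
    by (simp add: algebra_simps sum_subtractf)
  have out: "\<forall>e. e \<notin> E0 \<longrightarrow> ?w e = 0"
    using combination_outside_support[OF assms(2)] assms(3) by (auto simp: indicator_vec_def)
  have "(\<forall>\<omega>. lam P c \<omega> = (\<Sum>b\<in>B. r b * lam P b \<omega>))
      \<longleftrightarrow> (\<forall>\<omega>. (\<Sum>e\<in>E0. \<omega> e * ?w e) = 0)"
    unfolding eq[symmetric] by simp
  also have "\<dots> \<longleftrightarrow> ?w = 0" by (rule pairing_zero_iff[OF assms(1) out])
  finally show ?thesis by simp
qed

lemma pair_cord: "a \<in> X \<Longrightarrow> b \<in> X \<Longrightarrow> a \<noteq> b \<Longrightarrow> {a, b} \<in> cords X"
  by (auto simp: cords_def)

lemma bases_eq_max_indep:
  assumes "finite E0" "\<forall>c\<in>cords X. P c \<subseteq> E0"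
  shows "bases X P = {A. max_indep (indicator_vec P) (cords X) A}"
proof -
  have "L \<subseteq> cords X \<Longrightarrow> indep P L \<longleftrightarrow> lin_indep (indicator_vec P) L" for L
    by (rule indep_iff_lin_indep[OF assms(1)]) (use assms(2) in blast)
  thus ?thesis unfolding bases_def max_indep_def by blast
qed

lemma rho_eq_coeffs:
  assumes "finite E0" "\<forall>c\<in>cords X. cord_path_contr E f c \<subseteq> E0"
    and "B \<subseteq> cords X" "c \<in> cords X"
  shows "rho E f B c = coeffs (indicator_vec (cord_path_contr E f)) B c"
proof -
  have "(\<forall>\<omega>. lam (cord_path_contr E f) c \<omega> = (\<Sum>b\<in>B. r b * lam (cord_path_contr E f) b \<omega>))
     \<longleftrightarrow> indicator_vec (cord_path_contr E f) c
        = (\<Sum>b\<in>B. scale_fun (r b) (indicator_vec (cord_path_contr E f) b))" for r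
    by (rule lam_identity_iff[OF assms(1)]) (use assms in auto)
  thus ?thesis unfolding rho_def coeffs_def by simp
qed

lemma contraction_drops_coord:
  "indicator_vec (cord_path_contr E f) = drop_family (indicator_vec (cord_path E)) f"
  by (auto simp: fun_eq_iff indicator_vec_def drop_family_def drop_coord_def cord_path_contr_def)

lemma delta_eq_coord: "delta E f c = indicator_vec (cord_path E) c f"
  by (simp add: delta_def indicator_vec_def)

context
  fixes V :: "'v set" and E :: "'v set set"
  assumes tree: "is_tree V E"
begin

lemma cord_path_pair:
  assumes "x \<in> V" "y \<in> V"
  shows "cord_path E {x, y} = E_path E x y"
  using E_path_sym[OF tree assms] by (auto simp: cord_path_def doubleton_eq_iff)

lemma cord_path_subset: "c \<subseteq> V \<Longrightarrow> cord_path E c \<subseteq> E"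
  using E_path_subset[OF tree] by (fastforce simp: cord_path_def)

end

text \<open>For an interior edge f of an X-tree, the unit vector at f is a combination of cord
  indicators: u_f = (1_{ac} + 1_{bd} - 1_{ab} - 1_{cd}) / 2 for the quartet around f.\<close>
lemma unit_vec_in_cord_span:
  assumes xt: "is_X_tree X V E" and f: "interior_edge X E f"
  shows "unit_vec f \<in> fvs.span (indicator_vec (cord_path E) ` cords X)"
proof -
  let ?v = "indicator_vec (cord_path E)"
  let ?S = "fvs.span (?v ` cords X)"
  have tr: "is_tree V E" by (rule X_tree_is_tree[OF xt])
  have fE: "f \<in> E" "f \<inter> X = {}" using f by (auto simp: interior_edge_def)
  obtain a b c d where abcd: "a \<in> X" "b \<in> X" "c \<in> X" "d \<in> X" "a \<noteq> c" "b \<noteq> d" "a \<noteq> b" "c \<noteq> d"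
    and quartet: "\<And>e. (if e \<in> E_path E a c then 1 else 0) + (if e \<in> E_path E b d then 1 else 0)
       - (if e \<in> E_path E a b then 1 else 0) - (if e \<in> E_path E c d then 1 else 0)
       = (if e = f then 2 else (0::real))"
    using quartet_around_edge[OF xt fE] by blast
  have V: "a \<in> V" "b \<in> V" "c \<in> V" "d \<in> V" using abcd leaves_subset_V[OF xt] by auto
  have ind: "?v {x, y} e = (if e \<in> E_path E x y then 1 else 0)" if "x \<in> V" "y \<in> V" for x y e
    using cord_path_pair[OF tr that] by (simp add: indicator_vec_def)
  have "unit_vec f = scale_fun (1/2) (?v {a, c} + ?v {b, d} - ?v {a, b} - ?v {c, d})"
  proof
    fix e
    have "unit_vec f e = (1/2) * (if e = f then 2 else (0::real))" by (simp add: unit_vec_def)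
    thus "unit_vec f e = scale_fun (1/2) (?v {a, c} + ?v {b, d} - ?v {a, b} - ?v {c, d}) e"
      by (simp only: quartet[symmetric]) (simp add: scale_fun_apply ind V)
  qed
  moreover have "?v {x, y} \<in> ?S" if "x \<in> X" "y \<in> X" "x \<noteq> y" for x y
    using that by (auto intro!: fvs.span_base imageI pair_cord)
  ultimately show ?thesis using abcd by (metis fvs.span_add fvs.span_diff fvs.span_scale)
qed

theorem mainTheorem2:
  fixes X V :: "'v set" and E :: "'v set set" and f :: "'v set"
  assumes "is_X_tree X V E" and "finite X" and "card X \<ge> 3"
    and "interior_edge X E f"
  shows "bases X (cord_path E) =
    {insert c B | c B. c \<in> cords X \<and> B \<in> bases X (cord_path_contr E f) \<and>
       (\<Sum>b\<in>B. rho E f B c b * delta E f b) \<noteq> delta E f c}"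
proof -
  let ?v = "indicator_vec (cord_path E)"
  have tr: "is_tree V E" by (rule X_tree_is_tree[OF assms(1)])
  have paths: "\<forall>c\<in>cords X. cord_path E c \<subseteq> E"
    using cord_path_subset[OF tr] leaves_subset_V[OF assms(1)] by (auto simp: cords_def)
  hence paths_contr: "\<forall>c\<in>cords X. cord_path_contr E f c \<subseteq> E"
    by (auto simp: cord_path_contr_def)
  note bases_contr = bases_eq_max_indep[OF finite_E[OF tr] paths_contr, unfolded contraction_drops_coord]
  have coeffs_rho: "max_indep (drop_family ?v f) (cords X) B \<Longrightarrow> c \<in> cords X \<Longrightarrow>
      (\<Sum>b\<in>B. rho E f B c b * delta E f b) = (\<Sum>b\<in>B. coeffs (drop_family ?v f) B c b * ?v b f)"
    for B c using rho_eq_coeffs[OF finite_E[OF tr] paths_contr, of B c]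
    by (simp add: max_indep_def delta_eq_coord contraction_drops_coord)
  have condition: "(c \<in> cords X \<and> max_indep (drop_family ?v f) (cords X) B \<and>
       (\<Sum>b\<in>B. coeffs (drop_family ?v f) B c b * ?v b f) \<noteq> ?v c f)
    \<longleftrightarrow> (c \<in> cords X \<and> B \<in> bases X (cord_path_contr E f) \<and>
       (\<Sum>b\<in>B. rho E f B c b * delta E f b) \<noteq> delta E f c)" for B c
    using coeffs_rho[of B c] by (auto simp: bases_contr delta_eq_coord)
  have "bases X (cord_path E) = {A. max_indep ?v (cords X) A}"
    by (rule bases_eq_max_indep[OF finite_E[OF tr] paths])
  also have "\<dots> = {insert c B | c B. c \<in> cords X \<and> max_indep (drop_family ?v f) (cords X) B \<and>
       (\<Sum>b\<in>B. coeffs (drop_family ?v f) B c b * ?v b f) \<noteq> ?v c f}"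
    by (rule bases_after_dropping_coord[OF unit_vec_in_cord_span[OF assms(1,4)]])
  also have "\<dots> = {insert c B | c B. c \<in> cords X \<and> B \<in> bases X (cord_path_contr E f) \<and>
       (\<Sum>b\<in>B. rho E f B c b * delta E f b) \<noteq> delta E f c}"
    by (simp only: condition)
  finally show ?thesis .
qed

end
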